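(* Let $G$ be a finite subset of $\mathbb{N}^2$ that has at least one connected v-bridge. If $G$ contains a connected component $C$ (of the full grid graph of $G$) such that $C\cap(\{r_G\}\times\mathbb{N})\neq\emptyset$ and $C\cap(\mathbb{N}\times\{b_G\})=\emptyset$, then there exists a point $\vec x_E\in G\setminus C$ such that $E(\vec x_E)\notin G$ and $\vec x_E\notin\{r_G\}\times\mathbb{N}$.
   Context: The full grid graph of $V\subseteq\mathbb{Z}^2$ has vertex set $V$ and an edge between $\vec x,\vec y$ iff $\|\vec x-\vec y\|=1$; paths and connected components are taken in this graph. For a finite $S\subseteq\mathbb{Z}^2$ let $l_S=\min_{(x,y)\in S}x$, $r_S=\max_{(x,y)\in S}x$, $b_S=\min_{(x,y)\in S}y$, $t_S=\max_{(x,y)\in S}y$. An h-bridge of $S$ is a subset of $S$ of the form $\{(l_S,y),(r_S,y)\}$; a v-bridge is a subset of $S$ of the form $\{(x,b_S),(x,t_S)\}$. A bridge is connected if there is a simple path in (the full grid graph of) $S$ connecting its two points. Directions: $N(x,y)=(x,y+1)$, $E(x,y)=(x+1,y)$, $S(x,y)=(x,y-1)$, $W(x,y)=(x-1,y)$. *)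

theory Defs
  imports Main
begin

type_synonym pt = "nat \<times> nat"

definition grid_adj :: "pt \<Rightarrow> pt \<Rightarrow> bool" where
  "grid_adj p q \<longleftrightarrow>
     (fst p = fst q \<and> (snd q = snd p + 1 \<or> snd p = snd q + 1)) \<or>
     (snd p = snd q \<and> (fst q = fst p + 1 \<or> fst p = fst q + 1))"

definition dirE :: "pt \<Rightarrow> pt" where
  "dirE p = (fst p + 1, snd p)"

definition lS :: "pt set \<Rightarrow> nat" where "lS S = Min (fst ` S)"
definition rS :: "pt set \<Rightarrow> nat" where "rS S = Max (fst ` S)"
definition bS :: "pt set \<Rightarrow> nat" where "bS S = Min (snd ` S)"
definition tS :: "pt set \<Rightarrow> nat" where "tS S = Max (snd ` S)"

definition simple_path_in :: "pt set \<Rightarrow> pt list \<Rightarrow> bool" where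
  "simple_path_in S ps \<longleftrightarrow> ps \<noteq> [] \<and> distinct ps \<and> set ps \<subseteq> S \<and>
     (\<forall>i. Suc i < length ps \<longrightarrow> grid_adj (ps ! i) (ps ! Suc i))"

definition connected_in :: "pt set \<Rightarrow> pt \<Rightarrow> pt \<Rightarrow> bool" where
  "connected_in S p q \<longleftrightarrow>
     (\<exists>ps. simple_path_in S ps \<and> hd ps = p \<and> last ps = q)"

definition v_bridge :: "pt set \<Rightarrow> pt set \<Rightarrow> bool" where
  "v_bridge S B \<longleftrightarrow> B \<subseteq> S \<and> (\<exists>x. B = {(x, bS S), (x, tS S)})"

definition connected_v_bridge :: "pt set \<Rightarrow> pt set \<Rightarrow> bool" where
  "connected_v_bridge S B \<longleftrightarrow> v_bridge S B \<and>
     (\<exists>x. B = {(x, bS S), (x, tS S)} \<and> connected_in S (x, bS S) (x, tS S))"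

definition component :: "pt set \<Rightarrow> pt set \<Rightarrow> bool" where
  "component G C \<longleftrightarrow> (\<exists>p\<in>G. C = {q \<in> G. connected_in G p q})"

end

theory Submission
  imports Defs
begin

text \<open>The bridge path runs from the bottom row to the top row, so it meets the row of a point
  \<open>c \<in> C\<close> on the right border. Everything reachable from the bridge's bottom end lies outside \<open>C\<close>,
  because \<open>C\<close> is a component that avoids the bottom row. If every point of \<open>G - C\<close> off the right
  border had its east neighbour in \<open>G\<close>, walking east from the crossing point would stay reachable
  and arrive at \<open>c\<close>, a contradiction.\<close>

definition grid_step :: "pt set \<Rightarrow> pt \<Rightarrow> pt \<Rightarrow> bool" where
  "grid_step S u v \<longleftrightarrow> grid_adj u v \<and> v \<in> S"

lemma grid_adj_sym: "grid_adj p q \<Longrightarrow> grid_adj q p"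
  unfolding grid_adj_def by auto

lemma grid_step_rtranclp_sym:
  assumes "(grid_step S)\<^sup>*\<^sup>* a b" "a \<in> S"
  shows "b \<in> S \<and> (grid_step S)\<^sup>*\<^sup>* b a"
  using assms
proof (induction rule: rtranclp_induct)
  case base then show ?case by simp
next
  case (step b c)
  then have "b \<in> S" "(grid_step S)\<^sup>*\<^sup>* b a" by auto
  moreover have "grid_step S c b" "c \<in> S"
    using step(2) \<open>b \<in> S\<close> grid_adj_sym unfolding grid_step_def by blast+
  ultimately show ?case using converse_rtranclp_into_rtranclp by metis
qed

lemma simple_path_in_rtranclp_nth:
  assumes "simple_path_in S ps" "i < length ps"
  shows "(grid_step S)\<^sup>*\<^sup>* (ps ! 0) (ps ! i)"
  using assms(2)
proof (induction i)
  case 0 then show ?case by simp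
next
  case (Suc i)
  then have "(grid_step S)\<^sup>*\<^sup>* (ps ! 0) (ps ! i)" by simp
  moreover have "grid_step S (ps ! i) (ps ! Suc i)"
    using assms(1) Suc(2) unfolding simple_path_in_def grid_step_def by auto
  ultimately show ?case by (rule rtranclp.rtrancl_into_rtrancl)
qed

lemma connected_in_snoc:
  assumes "connected_in S a b" "grid_adj b c" "c \<in> S"
  shows "connected_in S a c"
proof -
  obtain ps where ps: "simple_path_in S ps" "hd ps = a" "last ps = b"
    using assms(1) unfolding connected_in_def by blast
  have ne: "ps \<noteq> []" using ps(1) unfolding simple_path_in_def by auto
  show ?thesis
  proof (cases "c \<in> set ps")
    case True
    \<comment> \<open>cut the path at its visit to \<open>c\<close> to keep it simple\<close>
    then obtain i where i: "i < length ps" "ps ! i = c" by (meson in_set_conv_nth)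
    have "simple_path_in S (take (Suc i) ps)"
      using ps(1) i unfolding simple_path_in_def by (auto dest: in_set_takeD)
    moreover have "hd (take (Suc i) ps) = a" using ps i by (simp add: hd_take)
    moreover have "last (take (Suc i) ps) = c" using i by (simp add: take_Suc_conv_app_nth)
    ultimately show ?thesis unfolding connected_in_def by blast
  next
    case False
    have "grid_adj ((ps @ [c]) ! j) ((ps @ [c]) ! Suc j)" if "Suc j < length (ps @ [c])" for j
    proof (cases "Suc j < length ps")
      case True then show ?thesis using ps(1) unfolding simple_path_in_def
        by (simp add: nth_append)
    next
      case False
      then have "j = length ps - 1" using that by simp
      then show ?thesis using ne ps(3) assms(2) by (auto simp: nth_append last_conv_nth)
    qed
    then have "simple_path_in S (ps @ [c])"
      using ps(1) False assms(3) unfolding simple_path_in_def by auto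
    then show ?thesis using ps ne unfolding connected_in_def by (intro exI[of _ "ps @ [c]"]) simp
  qed
qed

lemma connected_in_iff_rtranclp:
  assumes "a \<in> S"
  shows "connected_in S a b \<longleftrightarrow> (grid_step S)\<^sup>*\<^sup>* a b"
proof
  assume "connected_in S a b"
  then obtain ps where ps: "simple_path_in S ps" "hd ps = a" "last ps = b"
    unfolding connected_in_def by blast
  have "ps \<noteq> []" using ps(1) unfolding simple_path_in_def by auto
  then show "(grid_step S)\<^sup>*\<^sup>* a b"
    using simple_path_in_rtranclp_nth[OF ps(1), of "length ps - 1"] ps
    by (simp add: hd_conv_nth last_conv_nth)
next
  assume "(grid_step S)\<^sup>*\<^sup>* a b"
  then show "connected_in S a b"
  proof (induction rule: rtranclp_induct)
    case base
    then show ?case using assms unfolding connected_in_def simple_path_in_def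
      by (intro exI[of _ "[a]"]) auto
  next
    case (step b c)
    then show ?case using connected_in_snoc unfolding grid_step_def by blast
  qed
qed

lemma component_rtranclp_closed:
  assumes "component G C" "z \<in> C" "(grid_step G)\<^sup>*\<^sup>* w z" "w \<in> G"
  shows "w \<in> C"
proof -
  obtain p where p: "p \<in> G" and C: "C = {q \<in> G. connected_in G p q}"
    using assms(1) unfolding component_def by blast
  have "(grid_step G)\<^sup>*\<^sup>* p z" using assms(2) C connected_in_iff_rtranclp[OF p] by auto
  moreover have "(grid_step G)\<^sup>*\<^sup>* z w" using grid_step_rtranclp_sym[OF assms(3,4)] by blast
  ultimately show ?thesis using C assms(4) connected_in_iff_rtranclp[OF p] by auto
qed

lemma nat_unit_steps_ivt:
  fixes f :: "nat \<Rightarrow> nat"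
  assumes "f 0 \<le> y" "y \<le> f n" "\<forall>i<n. f (Suc i) \<le> f i + 1"
  shows "\<exists>i\<le>n. f i = y"
  using assms
proof (induction n)
  case 0 then show ?case by simp
next
  case (Suc n)
  show ?case
  proof (cases "y \<le> f n")
    case True then show ?thesis using Suc.IH Suc.prems(1,3) le_Suc_eq by auto
  next
    case False
    then have "f (Suc n) = y" using Suc.prems(2,3) by force
    then show ?thesis by blast
  qed
qed

lemma simple_path_in_crosses_row:
  assumes "simple_path_in S ps" "snd (hd ps) \<le> y" "y \<le> snd (last ps)"
  obtains x where "(x, y) \<in> S" "(grid_step S)\<^sup>*\<^sup>* (hd ps) (x, y)"
proof -
  have ne: "ps \<noteq> []" using assms(1) unfolding simple_path_in_def by auto
  have "\<exists>i\<le>length ps - 1. snd (ps ! i) = y"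
  proof (rule nat_unit_steps_ivt)
    show "snd (ps ! 0) \<le> y" using assms(2) ne by (simp add: hd_conv_nth)
    show "y \<le> snd (ps ! (length ps - 1))" using assms(3) ne by (simp add: last_conv_nth)
    show "\<forall>j<length ps - 1. snd (ps ! Suc j) \<le> snd (ps ! j) + 1"
    proof (intro allI impI)
      fix j assume "j < length ps - 1"
      then have "grid_adj (ps ! j) (ps ! Suc j)"
        using assms(1) unfolding simple_path_in_def by auto
      then show "snd (ps ! Suc j) \<le> snd (ps ! j) + 1" unfolding grid_adj_def by auto
    qed
  qed
  then obtain i where i: "i < length ps" "snd (ps ! i) = y"
    using ne by (metis One_nat_def Suc_pred length_greater_0_conv less_Suc_eq_le)
  have "ps ! i \<in> S" using assms(1) i(1) unfolding simple_path_in_def by auto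
  moreover have "(grid_step S)\<^sup>*\<^sup>* (hd ps) (ps ! i)"
    using simple_path_in_rtranclp_nth[OF assms(1) i(1)] ne by (simp add: hd_conv_nth)
  ultimately show ?thesis using that i(2) by (metis prod.collapse)
qed

lemma rtranclp_grid_step_walk_east:
  assumes "(grid_step S)\<^sup>*\<^sup>* w (x, y)" "x \<le> r"
    and east: "\<And>z. (grid_step S)\<^sup>*\<^sup>* w z \<Longrightarrow> fst z < r \<Longrightarrow> dirE z \<in> S"
  shows "(grid_step S)\<^sup>*\<^sup>* w (r, y)"
proof -
  have "(grid_step S)\<^sup>*\<^sup>* w (x + n, y)" if "n \<le> r - x" for n
    using that
  proof (induction n)
    case 0 then show ?case using assms(1) by simp
  next
    case (Suc n)
    then have IH: "(grid_step S)\<^sup>*\<^sup>* w (x + n, y)" by simp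
    then have "dirE (x + n, y) \<in> S" using east Suc.prems by simp
    then have "grid_step S (x + n, y) (x + Suc n, y)"
      unfolding grid_step_def dirE_def grid_adj_def by simp
    with IH show ?case by (rule rtranclp.rtrancl_into_rtrancl)
  qed
  from this[of "r - x"] show ?thesis using assms(2) by simp
qed

theorem mainTheorem5:
  fixes G C :: "(nat \<times> nat) set"
  assumes "finite G"
    and "\<exists>B. connected_v_bridge G B"
    and "component G C"
    and "C \<inter> {p. fst p = rS G} \<noteq> {}"
    and "C \<inter> {p. snd p = bS G} = {}"
  shows "\<exists>xE \<in> G - C. dirE xE \<notin> G \<and> fst xE \<noteq> rS G"
proof (rule ccontr)
  assume no_exit: "\<not> ?thesis"
  obtain x0 ps where ps: "simple_path_in G ps" "hd ps = (x0, bS G)" "last ps = (x0, tS G)"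
    using assms(2) unfolding connected_v_bridge_def connected_in_def by blast
  let ?w = "(x0, bS G)"
  have "ps \<noteq> []" "set ps \<subseteq> G" using ps(1) unfolding simple_path_in_def by auto
  then have w: "?w \<in> G" using ps(2) hd_in_set by force
  have outside_C: "z \<in> G - C" if "(grid_step G)\<^sup>*\<^sup>* ?w z" for z
  proof
    show "z \<in> G" using grid_step_rtranclp_sym[OF that w] by blast
    show "z \<notin> C" using component_rtranclp_closed[OF assms(3) _ that w] assms(5) by auto
  qed
  obtain y where c: "(rS G, y) \<in> C" using assms(4) by auto
  then have "(rS G, y) \<in> G"
    using assms(3) unfolding component_def by auto
  then have "y \<in> snd ` G" by force
  then have "bS G \<le> y" "y \<le> tS G"
    using assms(1) unfolding bS_def tS_def by simp_all
  then obtain x where x: "(x, y) \<in> G" "(grid_step G)\<^sup>*\<^sup>* ?w (x, y)"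
    using simple_path_in_crosses_row[OF ps(1)] ps(2,3) by auto
  have "x \<in> fst ` G" using x(1) by force
  then have "x \<le> rS G" using assms(1) unfolding rS_def by simp
  moreover have "dirE z \<in> G" if "(grid_step G)\<^sup>*\<^sup>* ?w z" "fst z < rS G" for z
    using no_exit outside_C[OF that(1)] that(2) by auto
  ultimately have "(grid_step G)\<^sup>*\<^sup>* ?w (rS G, y)"
    by (rule rtranclp_grid_step_walk_east[OF x(2)])
  then show False using outside_C c by simp
qed

end
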